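(* Let $q\geq 3$ be a prime power and let $k_1,k_2,l$ be non-negative integers such that $k_1=k_2=l+1\leq q-1$. Then there exists a linear $l$-intersection pair of two MDS codes over $\mathbb{F}_q$ both with parameters $[q,l+1,q-l]_q$.
   Context: An $[n,k,d]_q$ linear code is a $k$-dimensional subspace of $\mathbb{F}_q^n$ with minimum Hamming distance $d$; it is MDS if $d=n-k+1$. Two linear codes $C_1,C_2\subseteq\mathbb{F}_q^n$ form a linear $l$-intersection pair if $\dim(C_1\cap C_2)=l$. *)

theory Defs
  imports "HOL-Analysis.Analysis"
begin

definition hamming_dist :: "'a ^ 'n \<Rightarrow> 'a ^ 'n \<Rightarrow> nat" where
  "hamming_dist x y = card {i. x $ i \<noteq> y $ i}"

definition min_dist :: "('a ^ 'n) set \<Rightarrow> nat" where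
  "min_dist C = Min {hamming_dist x y | x y. x \<in> C \<and> y \<in> C \<and> x \<noteq> y}"

definition is_linear_code :: "('a::field ^ 'n) set \<Rightarrow> nat \<Rightarrow> nat \<Rightarrow> nat \<Rightarrow> bool" where
  "is_linear_code C n k d \<longleftrightarrow> n = CARD('n) \<and> vec.subspace C \<and> vec.dim C = k \<and> min_dist C = d"

definition is_MDS :: "('a::field ^ 'n) set \<Rightarrow> bool" where
  "is_MDS C \<longleftrightarrow> vec.subspace C \<and> min_dist C = CARD('n) - vec.dim C + 1"

definition is_l_intersection_pair :: "('a::field ^ 'n) set \<Rightarrow> ('a ^ 'n) set \<Rightarrow> nat \<Rightarrow> bool" where
  "is_l_intersection_pair C1 C2 l \<longleftrightarrow> vec.subspace C1 \<and> vec.subspace C2 \<and> vec.dim (C1 \<inter> C2) = l"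

end

theory Submission
  imports Defs "HOL-Computational_Algebra.Polynomial"
begin

text \<open>Both codes are generalized Reed--Solomon codes of dimension \<open>l + 1\<close> evaluating at all
  \<open>q\<close> field elements: \<open>C\<^sub>1\<close> with all column multipliers \<open>1\<close>, and \<open>C\<^sub>2\<close> with multiplier
  \<open>c \<notin> {0, 1}\<close> at the point \<open>0\<close>. GRS codes are MDS because a nonzero polynomial of degree
  \<open>\<le> l\<close> has at most \<open>l\<close> roots. A common codeword comes from polynomials \<open>f, g\<close> of degree
  \<open>\<le> l < q - 1\<close> agreeing on the \<open>q - 1\<close> nonzero points, so \<open>f = g\<close>, and then
  \<open>f(0) = c f(0)\<close> forces \<open>f(0) = 0\<close>. Hence \<open>C\<^sub>1 \<inter> C\<^sub>2\<close> is the evaluation code of the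
  polynomials spanned by \<open>x, \<dots>, x\<^sup>l\<close>, of dimension \<open>l\<close>.\<close>

definition weighted_eval :: "('n::finite \<Rightarrow> 'a::field) \<Rightarrow> ('n \<Rightarrow> 'a) \<Rightarrow> 'a poly \<Rightarrow> 'a ^ 'n" where
  "weighted_eval w e p = (\<chi> i. w i * poly p (e i))"

definition polys_supported :: "nat set \<Rightarrow> 'a::zero poly set" where
  "polys_supported J = {p. \<forall>n. n \<notin> J \<longrightarrow> coeff p n = 0}"

text \<open>The usual GRS code of dimension \<open>k\<close> is the case \<open>J = {..<k}\<close>; other exponent sets
  \<open>J\<close> give its subcodes spanned by monomials.\<close>

definition grs_code :: "('n::finite \<Rightarrow> 'a::field) \<Rightarrow> ('n \<Rightarrow> 'a) \<Rightarrow> nat set \<Rightarrow> ('a ^ 'n) set" where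
  "grs_code w e J = weighted_eval w e ` polys_supported J"

definition hamming_weight :: "'a::zero ^ 'n \<Rightarrow> nat" where
  "hamming_weight x = card {i. x $ i \<noteq> 0}"

lemma weighted_eval_0 [simp]: "weighted_eval w e 0 = 0"
  by (simp add: weighted_eval_def vec_eq_iff)

lemma weighted_eval_add [simp]: "weighted_eval w e (p + r) = weighted_eval w e p + weighted_eval w e r"
  by (simp add: weighted_eval_def vec_eq_iff algebra_simps)

lemma weighted_eval_diff [simp]: "weighted_eval w e (p - r) = weighted_eval w e p - weighted_eval w e r"
  by (simp add: weighted_eval_def vec_eq_iff algebra_simps)

lemma weighted_eval_smult [simp]: "weighted_eval w e (smult c p) = c *s weighted_eval w e p"
  by (simp add: weighted_eval_def vec_eq_iff algebra_simps)

lemma weighted_eval_sum [simp]: "weighted_eval w e (\<Sum>j\<in>J. f j) = (\<Sum>j\<in>J. weighted_eval w e (f j))"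
  by (simp add: weighted_eval_def vec_eq_iff poly_sum sum_distrib_left)

lemma weighted_eval_monom: "weighted_eval w e (monom c j) = c *s weighted_eval w e (monom 1 j)"
  by (simp add: weighted_eval_def vec_eq_iff poly_monom)

lemma polys_supported_lessThan_Suc_iff: "p \<in> polys_supported {..<Suc m} \<longleftrightarrow> degree p \<le> m"
  by (auto simp: polys_supported_def intro: degree_le coeff_eq_0)

lemma degree_in_support:
  assumes "p \<in> polys_supported J" "p \<noteq> 0"
  shows "degree p \<in> J"
  using assms leading_coeff_neq_0 by (auto simp: polys_supported_def)

lemma sum_monom_coeff_supported:
  assumes "finite J" "p \<in> polys_supported J"
  shows "(\<Sum>j\<in>J. monom (coeff p j) j) = p"
proof (rule poly_eqI)
  fix n
  have "coeff (\<Sum>j\<in>J. monom (coeff p j) j) n = (\<Sum>j\<in>J. if j = n then coeff p j else 0)"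
    by (simp add: coeff_sum coeff_monom)
  also have "\<dots> = coeff p n"
    using assms by (simp add: sum.delta' polys_supported_def)
  finally show "coeff (\<Sum>j\<in>J. monom (coeff p j) j) n = coeff p n" .
qed

lemma subspace_grs_code: "vec.subspace (grs_code w e J)"
  unfolding vec.subspace_def grs_code_def
proof (intro conjI ballI allI)
  show "0 \<in> weighted_eval w e ` polys_supported J"
    by (rule image_eqI[of _ _ 0]) (auto simp: polys_supported_def)
next
  fix x y assume "x \<in> weighted_eval w e ` polys_supported J" "y \<in> weighted_eval w e ` polys_supported J"
  then obtain p r where "p \<in> polys_supported J" "r \<in> polys_supported J"
    "x = weighted_eval w e p" "y = weighted_eval w e r" by auto
  then show "x + y \<in> weighted_eval w e ` polys_supported J"
    by (intro image_eqI[of _ _ "p + r"]) (auto simp: polys_supported_def)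
next
  fix c x assume "x \<in> weighted_eval w e ` polys_supported J"
  then obtain p where "p \<in> polys_supported J" "x = weighted_eval w e p" by auto
  then show "c *s x \<in> weighted_eval w e ` polys_supported J"
    by (intro image_eqI[of _ _ "smult c p"]) (auto simp: polys_supported_def)
qed

lemma span_grs_monoms:
  assumes "finite J"
  shows "vec.span ((\<lambda>j. weighted_eval w e (monom 1 j)) ` J) = grs_code w e J"
proof
  show "vec.span ((\<lambda>j. weighted_eval w e (monom 1 j)) ` J) \<subseteq> grs_code w e J"
    by (rule vec.span_minimal[OF _ subspace_grs_code])
      (auto simp: grs_code_def polys_supported_def coeff_monom)
next
  show "grs_code w e J \<subseteq> vec.span ((\<lambda>j. weighted_eval w e (monom 1 j)) ` J)"
  proof
    fix x assume "x \<in> grs_code w e J"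
    then obtain p where p: "p \<in> polys_supported J" and x: "x = weighted_eval w e p"
      by (auto simp: grs_code_def)
    have "x = (\<Sum>j\<in>J. coeff p j *s weighted_eval w e (monom 1 j))"
      unfolding x by (subst sum_monom_coeff_supported[OF assms p, symmetric])
        (simp add: weighted_eval_monom[of _ _ "coeff p _"])
    also have "\<dots> \<in> vec.span ((\<lambda>j. weighted_eval w e (monom 1 j)) ` J)"
      by (intro vec.span_sum vec.span_scale vec.span_base) auto
    finally show "x \<in> vec.span ((\<lambda>j. weighted_eval w e (monom 1 j)) ` J)" .
  qed
qed

lemma card_roots_at_points:
  fixes p :: "'a::idom poly"
  assumes "inj e" "p \<noteq> 0"
  shows "card {i. poly p (e i) = 0} \<le> degree p"
proof -
  have "card {i. poly p (e i) = 0} = card (e ` {i. poly p (e i) = 0})"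
    using assms(1) by (simp add: card_image inj_on_subset)
  also have "\<dots> \<le> card {x. poly p x = 0}"
    using poly_roots_finite[OF assms(2)] by (intro card_mono) auto
  also have "\<dots> \<le> degree p"
    using assms(2) by (rule card_poly_roots_bound)
  finally show ?thesis .
qed

lemma weighted_eval_eq_0_imp:
  assumes "inj e" "\<forall>i. w i \<noteq> 0" "J \<subseteq> {..<CARD('n::finite)}"
    and "p \<in> polys_supported J" "weighted_eval w e p = (0 :: 'a::field ^ 'n)"
  shows "p = 0"
proof (rule ccontr)
  assume "p \<noteq> 0"
  have "{i. poly p (e i) = 0} = UNIV"
    using assms(2,5) by (auto simp: weighted_eval_def vec_eq_iff)
  then have "CARD('n) \<le> degree p"
    using card_roots_at_points[OF assms(1) \<open>p \<noteq> 0\<close>] by simp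
  moreover have "degree p < CARD('n)"
    using degree_in_support[OF assms(4) \<open>p \<noteq> 0\<close>] assms(3) by auto
  ultimately show False by simp
qed

lemma
  assumes "inj e" "\<forall>i. w i \<noteq> 0" "J \<subseteq> {..<CARD('n::finite)}" "finite J"
  shows inj_on_grs_monoms: "inj_on (\<lambda>j. weighted_eval w e (monom 1 j) :: 'a::field ^ 'n) J"
    and independent_grs_monoms: "vec.independent ((\<lambda>j. weighted_eval w e (monom 1 j) :: 'a ^ 'n) ` J)"
proof -
  let ?g = "\<lambda>j. weighted_eval w e (monom 1 j) :: 'a ^ 'n"
  show inj: "inj_on ?g J"
  proof
    fix a b assume ab: "a \<in> J" "b \<in> J" "?g a = ?g b"
    have "monom 1 a - monom 1 b \<in> polys_supported J"
      using ab by (auto simp: polys_supported_def coeff_monom)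
    then have "monom (1::'a) a - monom 1 b = 0"
      using ab by (intro weighted_eval_eq_0_imp[OF assms(1-3)]) auto
    then show "a = b" by (simp add: monom_eq_iff')
  qed
  show "vec.independent (?g ` J)"
  proof (rule vec.independent_if_scalars_zero)
    show "finite (?g ` J)" using assms(4) by simp
  next
    fix f x assume comb: "(\<Sum>x\<in>?g ` J. f x *s x) = 0" and "x \<in> ?g ` J"
    then obtain j where j: "j \<in> J" "x = ?g j" by auto
    define P where "P = (\<Sum>j\<in>J. monom (f (?g j)) j)"
    have coeff_P: "coeff P n = (if n \<in> J then f (?g n) else 0)" for n
      using assms(4) by (simp add: P_def coeff_sum coeff_monom)
    have "weighted_eval w e P = (\<Sum>x\<in>?g ` J. f x *s x)"
      using inj by (simp add: P_def sum.reindex weighted_eval_monom[of _ _ "f _"])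
    then have "P = 0"
      using comb coeff_P by (intro weighted_eval_eq_0_imp[OF assms(1-3)]) (auto simp: polys_supported_def)
    then show "f x = 0" using coeff_P[of j] j by simp
  qed
qed

lemma dim_grs_code:
  assumes "inj e" "\<forall>i. w i \<noteq> 0" "J \<subseteq> {..<CARD('n::finite)}"
  shows "vec.dim (grs_code w e J :: ('a::field ^ 'n) set) = card J"
proof -
  have "finite J" using assms(3) finite_subset by blast
  then have "vec.dim (grs_code w e J :: ('a ^ 'n) set)
      = card ((\<lambda>j. weighted_eval w e (monom 1 j) :: 'a ^ 'n) ` J)"
    using vec.dim_span_eq_card_independent[OF independent_grs_monoms[OF assms]]
    by (simp add: span_grs_monoms)
  also have "\<dots> = card J"
    using \<open>finite J\<close> by (intro card_image inj_on_grs_monoms assms)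
  finally show ?thesis .
qed

lemma hamming_dist_eq_weight_diff: "hamming_dist x y = hamming_weight (x - y :: 'a::ab_group_add ^ 'n)"
  by (simp add: hamming_dist_def hamming_weight_def)

lemma min_dist_subspace:
  assumes "vec.subspace C"
  shows "min_dist C = Min {hamming_weight x | x. x \<in> C \<and> x \<noteq> 0}"
proof -
  have "{hamming_dist x y | x y. x \<in> C \<and> y \<in> C \<and> x \<noteq> y} = {hamming_weight x | x. x \<in> C \<and> x \<noteq> 0}"
  proof (intro equalityI subsetI)
    fix d assume "d \<in> {hamming_dist x y | x y. x \<in> C \<and> y \<in> C \<and> x \<noteq> y}"
    then obtain x y where "x \<in> C" "y \<in> C" "x \<noteq> y" "d = hamming_weight (x - y)"
      by (auto simp: hamming_dist_eq_weight_diff)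
    then show "d \<in> {hamming_weight x | x. x \<in> C \<and> x \<noteq> 0}"
      using vec.subspace_diff[OF assms] by fastforce
  next
    fix d assume "d \<in> {hamming_weight x | x. x \<in> C \<and> x \<noteq> 0}"
    then obtain x where "x \<in> C" "x \<noteq> 0" "d = hamming_dist x 0"
      by (auto simp: hamming_dist_eq_weight_diff)
    then show "d \<in> {hamming_dist x y | x y. x \<in> C \<and> y \<in> C \<and> x \<noteq> y}"
      using vec.subspace_0[OF assms] by blast
  qed
  then show ?thesis by (simp add: min_dist_def)
qed

lemma hamming_weight_weighted_eval:
  assumes "\<forall>i. w i \<noteq> 0"
  shows "hamming_weight (weighted_eval w e p :: 'a::field ^ 'n::finite) = CARD('n) - card {i. poly p (e i) = 0}"
proof -
  have "{i. (weighted_eval w e p :: 'a ^ 'n) $ i \<noteq> 0} = UNIV - {i. poly p (e i) = 0}"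
    using assms by (auto simp: weighted_eval_def)
  then show ?thesis by (simp add: hamming_weight_def card_Diff_subset)
qed

text \<open>The minimum weight \<open>n - m\<close> is attained by a product of \<open>m\<close> distinct linear factors
  vanishing at \<open>m\<close> of the evaluation points.\<close>

lemma min_dist_grs_code:
  assumes "inj e" "\<forall>i. w i \<noteq> 0" "Suc m \<le> CARD('n::finite)"
  shows "min_dist (grs_code w e {..<Suc m} :: ('a::field ^ 'n) set) = CARD('n) - m"
proof -
  let ?W = "{hamming_weight x | x. x \<in> (grs_code w e {..<Suc m} :: ('a ^ 'n) set) \<and> x \<noteq> 0}"
  have finite: "finite ?W"
    by (rule finite_subset[of _ "{..CARD('n)}"]) (auto simp: hamming_weight_def card_mono)
  moreover have lower: "CARD('n) - m \<le> d" if "d \<in> ?W" for d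
  proof -
    obtain p where p: "degree p \<le> m" "weighted_eval w e p \<noteq> (0 :: 'a ^ 'n)"
      and d: "d = hamming_weight (weighted_eval w e p :: 'a ^ 'n)"
      using \<open>d \<in> ?W\<close> by (auto simp: grs_code_def polys_supported_lessThan_Suc_iff)
    have "p \<noteq> 0" using p(2) by auto
    then show ?thesis
      using d p(1) card_roots_at_points[OF assms(1)] hamming_weight_weighted_eval[OF assms(2)]
      by fastforce
  qed
  moreover have attained: "CARD('n) - m \<in> ?W"
  proof -
    obtain I :: "'n set" where I: "card I = m" "finite I"
      using assms(3) by (meson Suc_leD obtain_subset_with_card_n)
    define P where "P = (\<Prod>i\<in>I. [:- e i, 1:])"
    have "degree P \<le> m"
      using degree_prod_sum_le[OF I(2), of "\<lambda>i. [:- e i, 1:]"] I(1) by (simp add: P_def)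
    moreover have roots: "{i. poly P (e i) = 0} = I"
      using I(2) assms(1) by (auto simp: P_def poly_prod inj_eq)
    then have weight: "hamming_weight (weighted_eval w e P :: 'a ^ 'n) = CARD('n) - m"
      using I(1) hamming_weight_weighted_eval[OF assms(2)] by simp
    then have "weighted_eval w e P \<noteq> (0 :: 'a ^ 'n)"
      using assms(3) by (auto simp: hamming_weight_def)
    ultimately show ?thesis
      using weight by (force simp: grs_code_def polys_supported_lessThan_Suc_iff)
  qed
  show ?thesis
    unfolding min_dist_subspace[OF subspace_grs_code] by (rule Min_eqI[OF finite lower attained])
qed

lemma
  assumes "inj e" "\<forall>i. w i \<noteq> 0" "Suc m \<le> CARD('n::finite)"
  shows is_linear_code_grs_code:
      "is_linear_code (grs_code w e {..<Suc m} :: ('a::field ^ 'n) set) CARD('n) (Suc m) (CARD('n) - m)"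
    and is_MDS_grs_code: "is_MDS (grs_code w e {..<Suc m} :: ('a ^ 'n) set)"
  using assms subspace_grs_code dim_grs_code[OF assms(1,2)] min_dist_grs_code[OF assms]
  by (auto simp: is_linear_code_def is_MDS_def)

lemma grs_code_inter_twisted:
  assumes "inj e" "e i\<^sub>0 = 0" "c \<noteq> 1" "Suc m < CARD('n::finite)"
  shows "grs_code (\<lambda>_. 1) e {..<Suc m} \<inter> grs_code ((\<lambda>_. 1)(i\<^sub>0 := c)) e {..<Suc m}
      = (grs_code (\<lambda>_. 1) e {1..m} :: ('a::field ^ 'n) set)"
    (is "?C\<^sub>1 \<inter> ?C\<^sub>2 = ?D")
proof
  show "?D \<subseteq> ?C\<^sub>1 \<inter> ?C\<^sub>2"
  proof
    fix x assume "x \<in> ?D"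
    then obtain p where p: "p \<in> polys_supported {1..m}" "x = weighted_eval (\<lambda>_. 1) e p"
      by (auto simp: grs_code_def)
    then have "p \<in> polys_supported {..<Suc m}" "poly p 0 = 0"
      by (auto simp: polys_supported_def poly_0_coeff_0)
    moreover have "x = weighted_eval ((\<lambda>_. 1)(i\<^sub>0 := c)) e p"
      using p(2) \<open>poly p 0 = 0\<close> assms(2) by (simp add: weighted_eval_def vec_eq_iff)
    ultimately show "x \<in> ?C\<^sub>1 \<inter> ?C\<^sub>2"
      using p(2) unfolding grs_code_def by blast
  qed
next
  show "?C\<^sub>1 \<inter> ?C\<^sub>2 \<subseteq> ?D"
  proof
    fix x assume "x \<in> ?C\<^sub>1 \<inter> ?C\<^sub>2"
    then obtain p r where p: "degree p \<le> m" "x = weighted_eval (\<lambda>_. 1) e p"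
      and r: "degree r \<le> m" "x = weighted_eval ((\<lambda>_. 1)(i\<^sub>0 := c)) e r"
      by (auto simp: grs_code_def polys_supported_lessThan_Suc_iff)
    have agree: "poly p (e i) = (if i = i\<^sub>0 then c else 1) * poly r (e i)" for i
      using p(2) r(2) by (simp add: weighted_eval_def vec_eq_iff)
    have "card (e ` (UNIV - {i\<^sub>0})) = CARD('n) - 1"
      using assms(1) by (simp add: card_image inj_on_subset card_Diff_subset)
    then have "p = r"
      using agree p(1) r(1) assms(4) by (intro poly_eqI_degree[of "e ` (UNIV - {i\<^sub>0})"]) (auto split: if_splits)
    then have "poly p 0 = c * poly p 0"
      using agree[of i\<^sub>0] assms(2) by simp
    then have "coeff p 0 = 0"
      using assms(3) by (simp add: poly_0_coeff_0)
    then have "p \<in> polys_supported {1..m}"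
      using p(1) by (auto simp: polys_supported_def not_le intro: coeff_eq_0)
    then show "x \<in> ?D" using p(2) by (auto simp: grs_code_def)
  qed
qed

lemma ex_neq_0_1_if_card_gt_2:
  assumes "CARD('a) > 2"
  obtains c :: "'a::zero_neq_one" where "c \<noteq> 0" "c \<noteq> 1"
proof -
  have "\<not> UNIV \<subseteq> {0 :: 'a, 1}"
  proof
    assume "UNIV \<subseteq> {0 :: 'a, 1}"
    then have "CARD('a) \<le> card {0 :: 'a, 1}" by (intro card_mono) auto
    then show False using assms by simp
  qed
  then show ?thesis using that by blast
qed

theorem theorem3:
  fixes q k1 k2 l :: nat
  assumes "CARD('a::{finite,field}) = q"
    and "CARD('n::finite) = q"
    and "q \<ge> 3"
    and "k1 = l + 1" and "k2 = l + 1" and "l + 1 \<le> q - 1"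
  shows "\<exists>C1 C2 :: ('a ^ 'n) set.
           is_linear_code C1 q k1 (q - l) \<and> is_linear_code C2 q k2 (q - l) \<and>
           is_MDS C1 \<and> is_MDS C2 \<and> is_l_intersection_pair C1 C2 l"
proof -
  obtain e :: "'n \<Rightarrow> 'a" where "bij e"
    using finite_same_card_bij[of "UNIV :: 'n set" "UNIV :: 'a set"] assms(1,2) by auto
  define i\<^sub>0 where "i\<^sub>0 = inv e 0"
  have e: "inj e" "e i\<^sub>0 = 0"
    using \<open>bij e\<close> by (simp_all add: i\<^sub>0_def bij_is_inj bij_is_surj surj_f_inv_f)
  have "CARD('a) > 2"
    using assms(1,3) by simp
  then obtain c :: 'a where c: "c \<noteq> 0" "c \<noteq> 1"
    by (rule ex_neq_0_1_if_card_gt_2)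
  define C\<^sub>1 where "C\<^sub>1 = (grs_code (\<lambda>_. 1) e {..<Suc l} :: ('a ^ 'n) set)"
  define C\<^sub>2 where "C\<^sub>2 = (grs_code ((\<lambda>_. 1)(i\<^sub>0 := c)) e {..<Suc l} :: ('a ^ 'n) set)"
  have nonzero: "\<forall>i. (\<lambda>_. 1 :: 'a) i \<noteq> 0" "\<forall>i. ((\<lambda>_. 1)(i\<^sub>0 := c)) i \<noteq> 0"
    using c by simp_all
  have "Suc l < CARD('n)"
    using assms by simp
  then have "C\<^sub>1 \<inter> C\<^sub>2 = grs_code (\<lambda>_. 1) e {1..l}"
    unfolding C\<^sub>1_def C\<^sub>2_def by (rule grs_code_inter_twisted[OF e c(2)])
  moreover have "vec.dim (grs_code (\<lambda>_. 1) e {1..l} :: ('a ^ 'n) set) = l"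
    using dim_grs_code[OF e(1) nonzero(1), of "{1..l}"] \<open>Suc l < CARD('n)\<close> by (simp add: subset_eq)
  ultimately have pair: "is_l_intersection_pair C\<^sub>1 C\<^sub>2 l"
    by (simp add: is_l_intersection_pair_def C\<^sub>1_def C\<^sub>2_def subspace_grs_code)
  have "Suc l \<le> CARD('n)"
    using assms by simp
  show ?thesis
    using pair is_linear_code_grs_code[OF e(1) nonzero(1) \<open>Suc l \<le> CARD('n)\<close>]
      is_linear_code_grs_code[OF e(1) nonzero(2) \<open>Suc l \<le> CARD('n)\<close>]
      is_MDS_grs_code[OF e(1) nonzero(1) \<open>Suc l \<le> CARD('n)\<close>]
      is_MDS_grs_code[OF e(1) nonzero(2) \<open>Suc l \<le> CARD('n)\<close>]
    unfolding C\<^sub>1_def C\<^sub>2_def assms(4,5) Suc_eq_plus1[symmetric] assms(2)[symmetric]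
    by blast
qed

end
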